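(* Let $G$ be a locally compact group acting properly and cocompactly on a smooth manifold $Y$, $T:Y\to Y$ a diffeomorphism commuting with the $G$-action, $M=(Y\times\mathbb R)/\mathbb Z$ the suspension for $n\cdot(y,t)=(T^ny,t-n)$ with classes $[y,t]$, $G$-action $x[y,t]=[xy,t]$ and suspension flow $\varphi_s[y,t]=[y,t+s]$. Let $g\in G$, and assume that for every $n\in\mathbb Z\setminus\{0\}$ the set $Y^{g^{-1}T^n}$ is empty or discrete and $\det(1-D_y(g^{-1}T^n))\neq0$ for all $y\in Y^{g^{-1}T^n}$. For $n\in L_g(\varphi)$ let $$f_n:Y^{g^{-1}T^n}\to\{\text{connected components of }M^{g^{-1}\varphi_n}\},\qquad f_n(y)=\{[y,t]:t\in\mathbb R\}.$$ Then, for $n\in L_g(\varphi)$, the fibres of $f_n$ are finite if and only if $g$ lies in a compact subgroup of $G$.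
   Context: $L_g(\varphi)=\{l\in\mathbb R\setminus\{0\}:\exists m\in M,\ \varphi_l(m)=gm\}$ (for the suspension flow this is a subset of $\mathbb Z\setminus\{0\}$). $M^{g^{-1}\varphi_n}$ is the set of points of $M$ fixed by $g^{-1}\circ\varphi_n$. *)

theory Defs
  imports "HOL-Analysis.Analysis" "HOL-Algebra.Group"
begin

text \<open>A map is smooth on an open set if it is differentiable there and all its
directional derivatives are again smooth (coinductively: derivatives of all orders exist).\<close>
coinductive smooth_on :: "'a::euclidean_space set \<Rightarrow> ('a \<Rightarrow> 'b::euclidean_space) \<Rightarrow> bool" where
  "\<lbrakk> \<forall>x\<in>S. f differentiable (at x);
     \<forall>v. smooth_on S (\<lambda>x. frechet_derivative f (at x) v) \<rbrakk> \<Longrightarrow> smooth_on S f"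

section \<open>Smooth manifolds modelled on R^n (n = CARD('n))\<close>

type_synonym ('y,'n) chart = "'y set \<times> ('y \<Rightarrow> real^'n)"

definition smooth_manifold :: "'y topology \<Rightarrow> ('y,'n::finite) chart set \<Rightarrow> bool" where
  "smooth_manifold Y A \<longleftrightarrow>
     Hausdorff_space Y \<and> second_countable Y \<and>
     (\<Union>(U,\<psi>)\<in>A. U) = topspace Y \<and>
     (\<forall>(U,\<psi>)\<in>A. openin Y U \<and> open (\<psi> ` U) \<and>
        homeomorphic_map (subtopology Y U) (subtopology euclidean (\<psi> ` U)) \<psi>) \<and>
     (\<forall>(U,\<psi>)\<in>A. \<forall>(V,\<phi>)\<in>A. smooth_on (\<psi> ` (U \<inter> V)) (\<phi> \<circ> inv_into U \<psi>))"

definition smooth_map :: "'y topology \<Rightarrow> ('y,'n::finite) chart set \<Rightarrow> ('y \<Rightarrow> 'y) \<Rightarrow> bool" where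
  "smooth_map Y A F \<longleftrightarrow> continuous_map Y Y F \<and>
     (\<forall>(U,\<psi>)\<in>A. \<forall>(V,\<phi>)\<in>A. smooth_on (\<psi> ` (U \<inter> F -` V)) (\<phi> \<circ> F \<circ> inv_into U \<psi>))"

definition diffeomorphism :: "'y topology \<Rightarrow> ('y,'n::finite) chart set \<Rightarrow> ('y \<Rightarrow> 'y) \<Rightarrow> bool" where
  "diffeomorphism Y A F \<longleftrightarrow> bij_betw F (topspace Y) (topspace Y) \<and>
     smooth_map Y A F \<and> smooth_map Y A (inv_into (topspace Y) F)"

definition nondegenerate_fixpoint ::
    "'y topology \<Rightarrow> ('y,'n::finite) chart set \<Rightarrow> ('y \<Rightarrow> 'y) \<Rightarrow> 'y \<Rightarrow> bool" where
  "nondegenerate_fixpoint Y A F y \<longleftrightarrow>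
     (\<forall>(U,\<psi>)\<in>A. y \<in> U \<longrightarrow>
        (\<exists>L. ((\<psi> \<circ> F \<circ> inv_into U \<psi>) has_derivative L) (at (\<psi> y)) \<and>
             det (mat 1 - matrix L) \<noteq> 0))"

definition locally_compact_group :: "('g,'b) monoid_scheme \<Rightarrow> 'g topology \<Rightarrow> bool" where
  "locally_compact_group G Gtop \<longleftrightarrow> group G \<and> topspace Gtop = carrier G \<and>
     continuous_map (prod_topology Gtop Gtop) Gtop (\<lambda>(a,b). a \<otimes>\<^bsub>G\<^esub> b) \<and>
     continuous_map Gtop Gtop (\<lambda>a. inv\<^bsub>G\<^esub> a) \<and>
     Hausdorff_space Gtop \<and> locally_compact_space Gtop"

definition proper_cocompact_smooth_action ::
    "('g,'b) monoid_scheme \<Rightarrow> 'g topology \<Rightarrow> 'y topology \<Rightarrow> ('y,'n::finite) chart set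
     \<Rightarrow> ('g \<Rightarrow> 'y \<Rightarrow> 'y) \<Rightarrow> bool" where
  "proper_cocompact_smooth_action G Gtop Y A act \<longleftrightarrow>
     (\<forall>y\<in>topspace Y. act \<one>\<^bsub>G\<^esub> y = y) \<and>
     (\<forall>a\<in>carrier G. \<forall>b\<in>carrier G. \<forall>y\<in>topspace Y. act (a \<otimes>\<^bsub>G\<^esub> b) y = act a (act b y)) \<and>
     continuous_map (prod_topology Gtop Y) Y (\<lambda>(a,y). act a y) \<and>
     (\<forall>a\<in>carrier G. diffeomorphism Y A (act a)) \<and>
     proper_map (prod_topology Gtop Y) (prod_topology Y Y) (\<lambda>(a,y). (act a y, y)) \<and>
     (\<exists>K. compactin Y K \<and> (\<Union>a\<in>carrier G. act a ` K) = topspace Y)"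

definition int_iter :: "'y set \<Rightarrow> ('y \<Rightarrow> 'y) \<Rightarrow> int \<Rightarrow> 'y \<Rightarrow> 'y" where
  "int_iter S T n = (if 0 \<le> n then T ^^ nat n else inv_into S T ^^ nat (- n))"

definition susp_rel :: "'y set \<Rightarrow> ('y \<Rightarrow> 'y) \<Rightarrow> (('y \<times> real) \<times> ('y \<times> real)) set" where
  "susp_rel S T = {((y,t),(y',t')). y \<in> S \<and> (\<exists>k::int. y' = int_iter S T k y \<and> t' = t - of_int k)}"

definition susp :: "'y set \<Rightarrow> ('y \<Rightarrow> 'y) \<Rightarrow> ('y \<times> real) set set" where
  "susp S T = (S \<times> UNIV) // susp_rel S T"

definition susp_class :: "'y set \<Rightarrow> ('y \<Rightarrow> 'y) \<Rightarrow> 'y \<Rightarrow> real \<Rightarrow> ('y \<times> real) set" where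
  "susp_class S T y t = susp_rel S T `` {(y,t)}"

definition quotient_topology :: "'a topology \<Rightarrow> 'a set set \<Rightarrow> 'a set topology" where
  "quotient_topology X P = topology (\<lambda>U. U \<subseteq> P \<and> openin X (\<Union>U))"

definition susp_top :: "'y topology \<Rightarrow> ('y \<Rightarrow> 'y) \<Rightarrow> ('y \<times> real) set topology" where
  "susp_top Y T = quotient_topology (prod_topology Y euclideanreal) (susp (topspace Y) T)"

definition susp_flow :: "real \<Rightarrow> ('y \<times> real) set \<Rightarrow> ('y \<times> real) set" where
  "susp_flow s m = (\<lambda>(y,t). (y, t + s)) ` m"

definition susp_act :: "('g \<Rightarrow> 'y \<Rightarrow> 'y) \<Rightarrow> 'g \<Rightarrow> ('y \<times> real) set \<Rightarrow> ('y \<times> real) set" where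
  "susp_act act a m = (\<lambda>(y,t). (act a y, t)) ` m"

definition L_set :: "'y topology \<Rightarrow> ('y \<Rightarrow> 'y) \<Rightarrow> ('g \<Rightarrow> 'y \<Rightarrow> 'y) \<Rightarrow> 'g \<Rightarrow> real set" where
  "L_set Y T act g = {l. l \<noteq> 0 \<and> (\<exists>m\<in>susp (topspace Y) T. susp_flow l m = susp_act act g m)}"

end

theory Submission
  imports Defs
begin

text \<open>A class \<open>[y,t]\<close> is fixed by \<open>g\<^sup>-\<^sup>1 \<circ> \<phi>\<^sub>n\<close> exactly when \<open>y\<close> is fixed by
  \<open>g\<^sup>-\<^sup>1 T\<^sup>n\<close>, so \<open>M\<^bsup>g\<^sup>-\<^sup>1\<phi>\<^sub>n\<^esup>\<close> is the union of the flow lines \<open>f y\<close>,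
  \<open>y \<in> Y\<^bsup>g\<^sup>-\<^sup>1T\<^sup>n\<^esup>\<close>. Two flow lines are equal or disjoint, and discreteness of
  \<open>Y\<^bsup>g\<^sup>-\<^sup>1T\<^sup>n\<^esup>\<close> makes each of them open, hence clopen, in the fixed set: the flow lines are
  exactly its connected components, and the fibre of \<open>f\<close> over \<open>f y\<close> is the \<open>T\<close>-orbit of \<open>y\<close>.
  On such a fixed point \<open>g\<^sup>j\<close> acts as \<open>T\<^bsup>nj\<^esup>\<close>. If \<open>g\<close> lies in a compact subgroup \<open>H\<close>,
  the points \<open>T\<^bsup>nj\<^esup> y\<close> lie in the compact discrete set \<open>H y \<inter> Y\<^bsup>g\<^sup>-\<^sup>1T\<^sup>n\<^esup>\<close>,
  so \<open>y\<close> is \<open>T\<close>-periodic and its orbit is finite. Conversely, if the \<open>T\<close>-orbit \<open>K\<close> of a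
  fixed point (one exists because \<open>n \<in> L\<^sub>g(\<phi>)\<close>) is finite, the setwise stabiliser of
  \<open>K\<close> is a closed subgroup containing \<open>g\<close> and lying in \<open>{a. a y \<in> K}\<close>, which is compact
  because the action is proper.\<close>

definition int_orbit :: "'y set \<Rightarrow> ('y \<Rightarrow> 'y) \<Rightarrow> 'y \<Rightarrow> 'y set" where
  "int_orbit S T y = range (\<lambda>k. int_iter S T k y)"

lemma int_iter_0 [simp]: "int_iter S T 0 y = y"
  by (simp add: int_iter_def)

lemma bij_betw_int_iter:
  assumes "bij_betw T S S" shows "bij_betw (int_iter S T k) S S"
  using bij_betw_funpow[OF assms] bij_betw_funpow[OF bij_betw_inv_into[OF assms]]
  by (simp add: int_iter_def)

lemma int_iter_in:
  assumes "bij_betw T S S" "y \<in> S" shows "int_iter S T k y \<in> S"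
  using bij_betw_int_iter[OF assms(1)] assms(2) by (rule bij_betw_apply)

lemma int_iter_nonneg: "int_iter S T (int m) y = (T ^^ m) y"
  by (simp add: int_iter_def)

lemma int_iter_nonpos: "int_iter S T (- int m) y = (inv_into S T ^^ m) y"
  by (cases "m = 0") (simp_all add: int_iter_def)

lemma int_iter_succ:
  assumes T: "bij_betw T S S" and y: "y \<in> S"
  shows "int_iter S T (k + 1) y = T (int_iter S T k y)"
proof (cases "0 \<le> k")
  case True
  then obtain m where k: "k = int m" by (metis nonneg_eq_int)
  then have "k + 1 = int (Suc m)" by simp
  then show ?thesis using k by (simp only: int_iter_nonneg funpow.simps o_apply)
next
  case False
  define m where "m = nat (- k) - 1"
  have k: "k = - int (Suc m)" and k1: "k + 1 = - int m" using False by (simp_all add: m_def)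
  have "int_iter S T (k + 1) y = (inv_into S T ^^ m) y"
    by (simp only: k1 int_iter_nonpos)
  moreover have "int_iter S T k y = inv_into S T ((inv_into S T ^^ m) y)"
    by (simp only: k int_iter_nonpos funpow.simps o_apply)
  moreover have "(inv_into S T ^^ m) y \<in> T ` S"
    using bij_betw_apply[OF bij_betw_funpow[OF bij_betw_inv_into[OF T]] y] T
    by (simp add: bij_betw_def)
  ultimately show ?thesis by (simp add: f_inv_into_f)
qed

lemma int_iter_pred:
  assumes T: "bij_betw T S S" and y: "y \<in> S"
  shows "int_iter S T (k - 1) y = inv_into S T (int_iter S T k y)"
  using int_iter_succ[OF assms, of "k - 1"] int_iter_in[OF assms, of "k - 1"] T
  by (simp add: bij_betw_def inv_into_f_f)

lemma int_iter_add:
  assumes T: "bij_betw T S S" and y: "y \<in> S"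
  shows "int_iter S T (j + k) y = int_iter S T j (int_iter S T k y)"
proof (induction j rule: int_induct[where k = 0])
  case (step1 i)
  have "int_iter S T (i + 1 + k) y = T (int_iter S T (i + k) y)"
    using int_iter_succ[OF T y, of "i + k"] by (simp add: add_ac)
  then show ?case using step1 int_iter_succ[OF T int_iter_in[OF T y]] by simp
next
  case (step2 i)
  have "int_iter S T (i - 1 + k) y = inv_into S T (int_iter S T (i + k) y)"
    using int_iter_pred[OF T y, of "i + k"] by (simp add: algebra_simps)
  then show ?case using step2 int_iter_pred[OF T int_iter_in[OF T y]] by simp
qed simp

lemma int_iter_neg_cancel:
  assumes "bij_betw T S S" "y \<in> S"
  shows "int_iter S T (- k) (int_iter S T k y) = y"
  using int_iter_add[OF assms, of "- k" k] by simp

lemma int_iter_commute: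
  assumes T: "bij_betw T S S" and y: "y \<in> S"
    and F_in: "\<And>z. z \<in> S \<Longrightarrow> F z \<in> S" and F_T: "\<And>z. z \<in> S \<Longrightarrow> T (F z) = F (T z)"
  shows "int_iter S T k (F y) = F (int_iter S T k y)"
proof (induction k rule: int_induct[where k = 0])
  case (step1 i)
  then show ?case
    using int_iter_succ[OF T F_in[OF y]] int_iter_succ[OF T y] F_T[OF int_iter_in[OF T y]] by simp
next
  case (step2 i)
  have "int_iter S T (i - 1) (F y) = inv_into S T (T (F (int_iter S T (i - 1) y)))"
    using step2 int_iter_pred[OF T F_in[OF y]] int_iter_succ[OF T y, of "i - 1"]
      F_T[OF int_iter_in[OF T y]] by simp
  then show ?case
    using T F_in[OF int_iter_in[OF T y]] by (simp add: bij_betw_def inv_into_f_f)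
qed simp

lemma continuous_map_int_iter:
  assumes T: "bij_betw T (topspace Y) (topspace Y)"
    and "continuous_map Y Y T" "continuous_map Y Y (inv_into (topspace Y) T)"
  shows "continuous_map Y Y (int_iter (topspace Y) T k)"
proof (induction k rule: int_induct[where k = 0])
  case base
  then show ?case by (simp add: int_iter_def)
next
  case (step1 i)
  then have "continuous_map Y Y (T \<circ> int_iter (topspace Y) T i)"
    using assms(2) continuous_map_compose by blast
  then show ?case by (rule continuous_map_eq) (simp add: int_iter_succ[OF T])
next
  case (step2 i)
  then have "continuous_map Y Y (inv_into (topspace Y) T \<circ> int_iter (topspace Y) T i)"
    using assms(3) continuous_map_compose by blast
  then show ?case by (rule continuous_map_eq) (simp add: int_iter_pred[OF T])
qed

lemma int_iter_multiple_period:
  assumes "bij_betw T S S" "y \<in> S" "int_iter S T p y = y"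
  shows "int_iter S T (p * j) y = y"
proof (induction j rule: int_induct[where k = 0])
  case (step1 i)
  then show ?case using int_iter_add[OF assms(1,2), of "p * i" p] assms(3)
    by (simp add: algebra_simps)
next
  case (step2 i)
  then show ?case using int_iter_add[OF assms(1,2), of "p * (i - 1)" p] assms(3)
    by (simp add: algebra_simps)
qed simp

lemma finite_int_orbit_if_periodic:
  assumes T: "bij_betw T S S" and y: "y \<in> S" and p: "int_iter S T p y = y" "p \<noteq> 0"
  shows "finite (int_orbit S T y)"
proof -
  have "p * sgn p = \<bar>p\<bar>" by (simp add: sgn_if)
  then have "int_iter S T (\<bar>p\<bar> * j) y = y" for j
    using int_iter_multiple_period[OF T y p(1), of "sgn p * j"] by (simp add: mult.assoc[symmetric])
  then have "int_iter S T k y = int_iter S T (k mod \<bar>p\<bar>) y" for k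
    using int_iter_add[OF T y, of "k mod \<bar>p\<bar>" "\<bar>p\<bar> * (k div \<bar>p\<bar>)"] by simp
  then have "int_iter S T k y \<in> (\<lambda>k. int_iter S T k y) ` {0..<\<bar>p\<bar>}" for k
    using p(2) by (intro image_eqI[of _ _ "k mod \<bar>p\<bar>"]) auto
  then have "int_orbit S T y \<subseteq> (\<lambda>k. int_iter S T k y) ` {0..<\<bar>p\<bar>}"
    by (auto simp: int_orbit_def)
  then show ?thesis by (rule finite_subset) simp
qed

lemma finite_int_orbit_if_finite_multiples:
  assumes T: "bij_betw T S S" and y: "y \<in> S" and "n \<noteq> 0"
    and fin: "finite (range (\<lambda>j::nat. int_iter S T (n * int j) y))"
  shows "finite (int_orbit S T y)"
proof -
  have "\<not> inj (\<lambda>j::nat. int_iter S T (n * int j) y)"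
    using fin finite_imageD infinite_UNIV_nat by blast
  then obtain i j :: nat
    where "i \<noteq> j" and ij: "int_iter S T (n * int i) y = int_iter S T (n * int j) y"
    unfolding inj_def by blast
  have "int_iter S T (- (n * int i) + n * int j) y = int_iter S T (- (n * int i)) (int_iter S T (n * int j) y)"
    by (rule int_iter_add[OF T y])
  also have "\<dots> = int_iter S T (- (n * int i)) (int_iter S T (n * int i) y)"
    by (simp only: ij)
  also have "\<dots> = y" by (rule int_iter_neg_cancel[OF T y])
  finally have "int_iter S T (- (n * int i) + n * int j) y = y" .
  moreover have "- (n * int i) + n * int j \<noteq> 0"
    using \<open>i \<noteq> j\<close> \<open>n \<noteq> 0\<close> by simp
  ultimately show ?thesis by (rule finite_int_orbit_if_periodic[OF T y])
qed

lemma susp_rel_equiv: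
  assumes T: "bij_betw T S S"
  shows "equiv (S \<times> UNIV) (susp_rel S T)"
proof (rule equivI)
  show "susp_rel S T \<subseteq> (S \<times> UNIV) \<times> S \<times> UNIV"
    by (auto simp: susp_rel_def int_iter_in[OF T])
  show "refl_on (S \<times> UNIV) (susp_rel S T)"
    by (auto simp: refl_on_def susp_rel_def intro!: exI[of _ 0])
  show "sym (susp_rel S T)"
  proof (rule symI)
    fix p q assume "(p, q) \<in> susp_rel S T"
    then obtain y t k where y: "y \<in> S" and "p = (y, t)" "q = (int_iter S T k y, t - of_int k)"
      by (auto simp: susp_rel_def)
    then show "(q, p) \<in> susp_rel S T"
      using int_iter_in[OF T y] int_iter_neg_cancel[OF T y, of k]
      by (auto simp: susp_rel_def intro!: exI[of _ "- k"])
  qed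
  show "trans (susp_rel S T)"
  proof (rule transI)
    fix p q r assume "(p, q) \<in> susp_rel S T" "(q, r) \<in> susp_rel S T"
    then obtain y t k l where y: "y \<in> S" and "p = (y, t)"
      and "r = (int_iter S T l (int_iter S T k y), t - of_int k - of_int l)"
      by (auto simp: susp_rel_def)
    then show "(p, r) \<in> susp_rel S T"
      using int_iter_add[OF T y, of l k] by (auto simp: susp_rel_def intro!: exI[of _ "l + k"])
  qed
qed

lemma mem_susp_class:
  "(y', t') \<in> susp_class S T y t \<longleftrightarrow> y \<in> S \<and> (\<exists>k. y' = int_iter S T k y \<and> t' = t - of_int k)"
  by (simp add: susp_class_def susp_rel_def)

lemma susp_class_self: "y \<in> S \<Longrightarrow> (y, t) \<in> susp_class S T y t"
  by (simp add: mem_susp_class exI[of _ 0])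

lemma susp_class_in_susp: "y \<in> S \<Longrightarrow> susp_class S T y t \<in> susp S T"
  unfolding susp_def susp_class_def by (rule quotientI) simp

lemma susp_cases:
  assumes "m \<in> susp S T"
  obtains y t where "y \<in> S" "m = susp_class S T y t"
  using assms unfolding susp_def susp_class_def by (auto elim!: quotientE)

lemma susp_class_eq_iff:
  assumes T: "bij_betw T S S" and "y \<in> S" "y' \<in> S"
  shows "susp_class S T y t = susp_class S T y' t' \<longleftrightarrow>
    (\<exists>k. y' = int_iter S T k y \<and> t' = t - of_int k)"
  using equiv_class_eq_iff[OF susp_rel_equiv[OF T], of "(y, t)" "(y', t')"] assms(2,3)
  by (simp add: susp_class_def susp_rel_def)

lemma susp_eq_class_of_mem:
  assumes T: "bij_betw T S S" and m: "m \<in> susp S T" and "(y, t) \<in> m"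
  shows "m = susp_class S T y t" and "y \<in> S"
proof -
  obtain y0 t0 where "y0 \<in> S" and m_eq: "m = susp_class S T y0 t0"
    using m by (rule susp_cases)
  then show "y \<in> S" using int_iter_in[OF T] \<open>(y, t) \<in> m\<close> by (auto simp: mem_susp_class)
  with \<open>y0 \<in> S\<close> show "m = susp_class S T y t"
    using \<open>(y, t) \<in> m\<close> unfolding m_eq
    by (auto simp: susp_class_eq_iff[OF T] mem_susp_class)
qed

lemma susp_class_int_iter:
  assumes T: "bij_betw T S S" and y: "y \<in> S"
  shows "susp_class S T (int_iter S T k y) t = susp_class S T y (t + of_int k)"
proof -
  have "susp_class S T y (t + of_int k) = susp_class S T (int_iter S T k y) t"
    using susp_class_eq_iff[OF T y int_iter_in[OF T y]] by auto
  then show ?thesis by simp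
qed

lemma susp_flow_class: "susp_flow s (susp_class S T y t) = susp_class S T y (t + s)"
proof (rule Set.set_eqI, rule iffI)
  fix p assume "p \<in> susp_flow s (susp_class S T y t)"
  then show "p \<in> susp_class S T y (t + s)" by (auto simp: susp_flow_def mem_susp_class)
next
  fix p assume "p \<in> susp_class S T y (t + s)"
  then obtain k where "y \<in> S" "p = (int_iter S T k y, t + s - of_int k)"
    by (cases p) (auto simp: mem_susp_class)
  then show "p \<in> susp_flow s (susp_class S T y t)"
    unfolding susp_flow_def
    by (intro image_eqI[of _ _ "(int_iter S T k y, t - of_int k)"]) (auto simp: mem_susp_class)
qed

lemma image_susp_class_commuting:
  assumes T: "bij_betw T S S" and y: "y \<in> S"
    and F_in: "\<And>z. z \<in> S \<Longrightarrow> F z \<in> S" and F_T: "\<And>z. z \<in> S \<Longrightarrow> T (F z) = F (T z)"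
  shows "(\<lambda>(y, t). (F y, t)) ` susp_class S T y t = susp_class S T (F y) t"
proof (rule Set.set_eqI, rule iffI)
  fix p assume "p \<in> (\<lambda>(y, t). (F y, t)) ` susp_class S T y t"
  then show "p \<in> susp_class S T (F y) t"
    using int_iter_commute[where F = F, OF T y F_in F_T] F_in[OF y] by (auto simp: mem_susp_class)
next
  fix p assume "p \<in> susp_class S T (F y) t"
  then obtain k where "p = (int_iter S T k (F y), t - of_int k)"
    by (cases p) (auto simp: mem_susp_class)
  then show "p \<in> (\<lambda>(y, t). (F y, t)) ` susp_class S T y t"
    using int_iter_commute[where F = F, OF T y F_in F_T] y
    by (intro image_eqI[of _ _ "(int_iter S T k y, t - of_int k)"]) (auto simp: mem_susp_class)
qed

lemma pairwise_disjnt_eqI: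
  "pairwise disjnt P \<Longrightarrow> p \<in> P \<Longrightarrow> p' \<in> P \<Longrightarrow> x \<in> p \<Longrightarrow> x \<in> p' \<Longrightarrow> p = p'"
  by (metis disjnt_iff pairwiseD)

lemma istopology_quotient:
  assumes P: "pairwise disjnt P"
  shows "istopology (\<lambda>U. U \<subseteq> P \<and> openin X (\<Union>U))"
  unfolding istopology_def
proof (rule conjI; intro allI impI)
  fix U V assume U: "U \<subseteq> P \<and> openin X (\<Union>U)" and V: "V \<subseteq> P \<and> openin X (\<Union>V)"
  have "\<Union>U \<inter> \<Union>V \<subseteq> \<Union>(U \<inter> V)"
  proof
    fix x assume "x \<in> \<Union>U \<inter> \<Union>V"
    then obtain p p' where "x \<in> p" "p \<in> U" "x \<in> p'" "p' \<in> V" by blast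
    moreover from this have "p = p'" using pairwise_disjnt_eqI[OF P] U V by blast
    ultimately show "x \<in> \<Union>(U \<inter> V)" by blast
  qed
  then have "\<Union>(U \<inter> V) = \<Union>U \<inter> \<Union>V" by blast
  then show "U \<inter> V \<subseteq> P \<and> openin X (\<Union>(U \<inter> V))" using U V by auto
next
  fix K assume "\<forall>U\<in>K. U \<subseteq> P \<and> openin X (\<Union>U)"
  moreover have "\<Union>(\<Union>K) = \<Union>(Union ` K)" by blast
  ultimately show "\<Union>K \<subseteq> P \<and> openin X (\<Union>(\<Union>K))" by auto
qed

lemma openin_quotient_topology:
  assumes "pairwise disjnt P"
  shows "openin (quotient_topology X P) U \<longleftrightarrow> U \<subseteq> P \<and> openin X (\<Union>U)"
  unfolding quotient_topology_def using istopology_quotient[OF assms] by simp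

lemma topspace_quotient_topology:
  assumes "pairwise disjnt P" "\<Union>P = topspace X"
  shows "topspace (quotient_topology X P) = P"
proof
  have "openin (quotient_topology X P) P"
    using assms by (simp add: openin_quotient_topology)
  then show "P \<subseteq> topspace (quotient_topology X P)" by (rule openin_subset)
  show "topspace (quotient_topology X P) \<subseteq> P"
    unfolding topspace_def by (auto simp: openin_quotient_topology[OF assms(1)])
qed

lemma continuous_map_quotient_topology:
  assumes P: "pairwise disjnt P" "\<Union>P = topspace X"
    and q: "\<And>x. x \<in> topspace X \<Longrightarrow> q x \<in> P \<and> x \<in> q x"
  shows "continuous_map X (quotient_topology X P) q"
  unfolding continuous_map_def topspace_quotient_topology[OF P]
proof (intro conjI allI impI)
  show "q \<in> topspace X \<rightarrow> P" using q by auto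
next
  fix U assume "openin (quotient_topology X P) U"
  then have U: "U \<subseteq> P" "openin X (\<Union>U)" by (auto simp: openin_quotient_topology[OF P(1)])
  have "{x \<in> topspace X. q x \<in> U} = \<Union>U"
  proof (intro Set.set_eqI iffI)
    fix x assume "x \<in> \<Union>U"
    then obtain p where "x \<in> p" "p \<in> U" by blast
    moreover from this have "x \<in> topspace X" using U(1) P(2) by blast
    ultimately have "q x = p"
      using q pairwise_disjnt_eqI[OF P(1)] U(1) by blast
    with \<open>x \<in> topspace X\<close> \<open>p \<in> U\<close> show "x \<in> {x \<in> topspace X. q x \<in> U}" by simp
  qed (use q in blast)
  with U show "openin X {x \<in> topspace X. q x \<in> U}" by simp
qed

lemma connected_clopen_in_connected_components_of:
  assumes C: "connectedin X C" "openin X C" "closedin X C" and "x \<in> C"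
  shows "C \<in> connected_components_of X"
proof -
  have x: "x \<in> topspace X" using closedin_subset[OF C(3)] \<open>x \<in> C\<close> by blast
  have "connected_component_of_set X x \<subseteq> C \<or> disjnt (connected_component_of_set X x) C"
    by (rule connectedin_clopen_cases[OF connectedin_connected_component_of C(3,2)])
  then have "connected_component_of_set X x \<subseteq> C"
    using \<open>x \<in> C\<close> connected_component_of_refl[of X x] x by (auto simp: disjnt_iff)
  moreover have "C \<subseteq> connected_component_of_set X x"
    by (rule connected_component_of_maximal[OF C(1) \<open>x \<in> C\<close>])
  ultimately show ?thesis
    using connected_component_in_connected_components_of[of X x] x by auto
qed

locale continuous_group_action = group G for G :: "('g, 'b) monoid_scheme" (structure) +
  fixes Gtop :: "'g topology" and Y :: "'y topology" and act :: "'g \<Rightarrow> 'y \<Rightarrow> 'y"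
  assumes topspace_Gtop: "topspace Gtop = carrier G"
    and act_one: "y \<in> topspace Y \<Longrightarrow> act \<one> y = y"
    and act_mult: "\<lbrakk>a \<in> carrier G; b \<in> carrier G; y \<in> topspace Y\<rbrakk> \<Longrightarrow> act (a \<otimes> b) y = act a (act b y)"
    and continuous_map_act: "continuous_map (prod_topology Gtop Y) Y (\<lambda>(a, y). act a y)"
begin

lemma act_closed: "a \<in> carrier G \<Longrightarrow> y \<in> topspace Y \<Longrightarrow> act a y \<in> topspace Y"
  using continuous_map_act topspace_Gtop unfolding continuous_map_def by (force simp: Pi_iff)

lemma act_inv_act: "a \<in> carrier G \<Longrightarrow> y \<in> topspace Y \<Longrightarrow> act (inv a) (act a y) = y"
  by (metis act_mult act_one l_inv inv_closed)

lemma act_act_inv: "a \<in> carrier G \<Longrightarrow> y \<in> topspace Y \<Longrightarrow> act a (act (inv a) y) = y"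
  by (metis act_mult act_one r_inv inv_closed)

lemma continuous_map_orbit_map:
  assumes "y \<in> topspace Y"
  shows "continuous_map Gtop Y (\<lambda>a. act a y)"
proof -
  have "continuous_map Gtop (prod_topology Gtop Y) (\<lambda>a. (a, y))"
    using assms by (intro continuous_map_pairedI) auto
  from continuous_map_compose[OF this continuous_map_act] show ?thesis by (simp add: o_def)
qed

lemma continuous_map_act_left:
  assumes "a \<in> carrier G"
  shows "continuous_map Y Y (act a)"
proof -
  have "continuous_map Y (prod_topology Gtop Y) (\<lambda>y. (a, y))"
    using assms topspace_Gtop by (intro continuous_map_pairedI) auto
  from continuous_map_compose[OF this continuous_map_act] show ?thesis by (simp add: o_def)
qed

lemma subgroup_setwise_stabiliser:
  assumes K: "finite K" "K \<subseteq> topspace Y"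
  shows "subgroup {a \<in> carrier G. act a ` K \<subseteq> K} G"
proof (rule subgroupI)
  show "{a \<in> carrier G. act a ` K \<subseteq> K} \<noteq> {}"
    using K(2) act_one by (auto intro!: exI[of _ \<one>])
next
  fix a assume a: "a \<in> {a \<in> carrier G. act a ` K \<subseteq> K}"
  have a_G: "a \<in> carrier G" and a_K: "act a ` K \<subseteq> K" using a by auto
  have "inj_on (act a) K"
  proof (rule inj_onI)
    fix x z assume "x \<in> K" "z \<in> K" "act a x = act a z"
    then show "x = z" using K(2) act_inv_act[OF a_G] by (metis subsetD)
  qed
  then have "act a ` K = K" using a_K K(1) endo_inj_surj by blast
  then have "act (inv a) ` K = (\<lambda>x. act (inv a) (act a x)) ` K" by (metis image_image)
  also have "\<dots> = K" using K(2) act_inv_act[OF a_G] by (auto simp: subset_iff)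
  finally have "act (inv a) ` K = K" .
  then show "inv a \<in> {a \<in> carrier G. act a ` K \<subseteq> K}" using a_G by simp
next
  fix a b assume "a \<in> {a \<in> carrier G. act a ` K \<subseteq> K}" "b \<in> {a \<in> carrier G. act a ` K \<subseteq> K}"
  then show "a \<otimes> b \<in> {a \<in> carrier G. act a ` K \<subseteq> K}"
    using K(2) act_mult by (auto simp: image_subset_iff)
qed auto

end

locale proper_group_action = continuous_group_action +
  assumes Hausdorff_Y: "Hausdorff_space Y"
    and proper_act: "proper_map (prod_topology Gtop Y) (prod_topology Y Y) (\<lambda>(a, y). (act a y, y))"
begin

lemma compactin_transporter:
  assumes "compactin Y K" "y \<in> topspace Y"
  shows "compactin Gtop {a \<in> carrier G. act a y \<in> K}"
proof -
  let ?P = "{x \<in> topspace (prod_topology Gtop Y). (\<lambda>(a, y). (act a y, y)) x \<in> K \<times> {y}}"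
  have "compactin (prod_topology Gtop Y) ?P"
    using assms by (intro compactin_proper_map_preimage[OF proper_act]) (simp add: compactin_Times)
  then have "compactin Gtop (fst ` ?P)" by (rule image_compactin[OF _ continuous_map_fst])
  moreover have "fst ` ?P = {a \<in> carrier G. act a y \<in> K}"
  proof (intro Set.set_eqI iffI)
    fix a assume "a \<in> fst ` ?P"
    then obtain z where "(a, z) \<in> topspace (prod_topology Gtop Y)" "act a z \<in> K" "z = y" by auto
    then show "a \<in> {a \<in> carrier G. act a y \<in> K}" using topspace_Gtop by auto
  next
    fix a assume "a \<in> {a \<in> carrier G. act a y \<in> K}"
    then have "(a, y) \<in> ?P" using assms(2) topspace_Gtop by auto
    then show "a \<in> fst ` ?P" by (rule rev_image_eqI) simp
  qed
  ultimately show ?thesis by simp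
qed

lemma compactin_setwise_stabiliser:
  assumes K: "finite K" "K \<subseteq> topspace Y" "y \<in> K"
  shows "compactin Gtop {a \<in> carrier G. act a ` K \<subseteq> K}"
proof (rule closed_compactin)
  show "compactin Gtop {a \<in> carrier G. act a y \<in> K}"
    using K by (intro compactin_transporter finite_imp_compactin) auto
  show "{a \<in> carrier G. act a ` K \<subseteq> K} \<subseteq> {a \<in> carrier G. act a y \<in> K}"
    using K(3) by auto
  have "closedin Y K" by (rule closedin_Hausdorff_finite[OF Hausdorff_Y K(2,1)])
  then have "closedin Gtop (\<Inter>x\<in>K. {a \<in> topspace Gtop. act a x \<in> K})"
    using K(2,3) continuous_map_orbit_map
    by (intro closedin_Inter) (auto intro!: closedin_continuous_map_preimage)
  moreover have "(\<Inter>x\<in>K. {a \<in> topspace Gtop. act a x \<in> K}) = {a \<in> carrier G. act a ` K \<subseteq> K}"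
    using K(3) topspace_Gtop by auto
  ultimately show "closedin Gtop {a \<in> carrier G. act a ` K \<subseteq> K}" by simp
qed

end

locale suspension = continuous_group_action +
  fixes T :: "'y \<Rightarrow> 'y"
  assumes bij_T: "bij_betw T (topspace Y) (topspace Y)"
    and continuous_T: "continuous_map Y Y T"
    and continuous_T_inv: "continuous_map Y Y (inv_into (topspace Y) T)"
    and T_act: "\<lbrakk>a \<in> carrier G; y \<in> topspace Y\<rbrakk> \<Longrightarrow> T (act a y) = act a (T y)"
begin

abbreviation "iter \<equiv> int_iter (topspace Y) T"
abbreviation "M \<equiv> susp (topspace Y) T"
abbreviation "cls \<equiv> susp_class (topspace Y) T"
abbreviation "flow_line y \<equiv> {cls y t | t. True}"

lemma iter_act: "a \<in> carrier G \<Longrightarrow> y \<in> topspace Y \<Longrightarrow> iter k (act a y) = act a (iter k y)"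
  using int_iter_commute[where F = "act a", OF bij_T _ act_closed] T_act by blast

lemma susp_act_class: "a \<in> carrier G \<Longrightarrow> y \<in> topspace Y \<Longrightarrow> susp_act act a (cls y t) = cls (act a y) t"
  unfolding susp_act_def
  using image_susp_class_commuting[where F = "act a", OF bij_T _ act_closed] T_act by blast

lemma pairwise_disjnt_susp: "pairwise disjnt M"
  using quotient_disj[OF susp_rel_equiv[OF bij_T]]
  unfolding susp_def pairwise_def disjnt_def by blast

lemma Union_susp: "\<Union>M = topspace (prod_topology Y euclideanreal)"
  using Union_quotient[OF susp_rel_equiv[OF bij_T]] unfolding susp_def by simp

lemma openin_susp_top:
  "openin (susp_top Y T) U \<longleftrightarrow> U \<subseteq> M \<and> openin (prod_topology Y euclideanreal) (\<Union>U)"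
  unfolding susp_top_def by (rule openin_quotient_topology[OF pairwise_disjnt_susp])

lemma topspace_susp_top: "topspace (susp_top Y T) = M"
  unfolding susp_top_def by (rule topspace_quotient_topology[OF pairwise_disjnt_susp Union_susp])

lemma continuous_map_susp_class:
  "continuous_map (prod_topology Y euclideanreal) (susp_top Y T) (\<lambda>(y, t). cls y t)"
  unfolding susp_top_def
  by (rule continuous_map_quotient_topology[OF pairwise_disjnt_susp Union_susp])
    (auto simp: susp_class_in_susp susp_class_self)

lemma connectedin_flow_line: "y \<in> topspace Y \<Longrightarrow> connectedin (susp_top Y T) (flow_line y)"
proof -
  assume y: "y \<in> topspace Y"
  have "continuous_map euclideanreal (prod_topology Y euclideanreal) (\<lambda>t. (y, t))"
    using y by (intro continuous_map_pairedI) auto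
  from continuous_map_compose[OF this continuous_map_susp_class]
  have "connectedin (susp_top Y T) ((\<lambda>t. cls y t) ` UNIV)"
    by (intro connectedin_continuous_map_image) (auto simp: o_def)
  moreover have "(\<lambda>t. cls y t) ` UNIV = flow_line y" by auto
  ultimately show ?thesis by simp
qed

text \<open>The quotient map is open: the saturation of an open set \<open>V \<times> \<real>\<close> is a union of its
  open translates under the iterates of \<open>T\<close>.\<close>
lemma openin_susp_top_saturation:
  assumes "openin Y V"
  shows "openin (susp_top Y T) {m \<in> M. m \<inter> (V \<times> UNIV) \<noteq> {}}"
proof -
  let ?X = "prod_topology Y euclideanreal"
  have "\<Union>{m \<in> M. m \<inter> (V \<times> UNIV) \<noteq> {}} = (\<Union>k. {p \<in> topspace ?X. iter k (fst p) \<in> V})"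
  proof (intro Set.set_eqI iffI)
    fix p assume "p \<in> \<Union>{m \<in> M. m \<inter> (V \<times> UNIV) \<noteq> {}}"
    then obtain m w s where m: "m \<in> M" "p \<in> m" "(w, s) \<in> m" "w \<in> V" by auto
    have p: "p \<in> topspace ?X" using m(1,2) Union_susp by blast
    have "m = cls (fst p) (snd p)" using susp_eq_class_of_mem[OF bij_T m(1), of "fst p" "snd p"] m(2) by simp
    then obtain k where "w = iter k (fst p)" using m(3) by (auto simp: mem_susp_class)
    then show "p \<in> (\<Union>k. {p \<in> topspace ?X. iter k (fst p) \<in> V})" using p m(4) by auto
  next
    fix p assume "p \<in> (\<Union>k. {p \<in> topspace ?X. iter k (fst p) \<in> V})"
    then obtain k z s where k: "iter k z \<in> V" and p: "p = (z, s)" "z \<in> topspace Y" by auto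
    have "(iter k z, s - of_int k) \<in> cls z s \<inter> (V \<times> UNIV)" using k p(2) by (auto simp: mem_susp_class)
    then have "cls z s \<in> {m \<in> M. m \<inter> (V \<times> UNIV) \<noteq> {}}" using susp_class_in_susp[OF p(2)] by blast
    then show "p \<in> \<Union>{m \<in> M. m \<inter> (V \<times> UNIV) \<noteq> {}}" using susp_class_self[OF p(2)] p(1) by blast
  qed
  moreover have "openin ?X {p \<in> topspace ?X. iter k (fst p) \<in> V}" for k
  proof -
    have "continuous_map ?X Y (iter k \<circ> fst)"
      by (rule continuous_map_compose[OF continuous_map_fst
            continuous_map_int_iter[OF bij_T continuous_T continuous_T_inv]])
    from openin_continuous_map_preimage[OF this assms] show ?thesis by simp
  qed
  ultimately show ?thesis by (auto simp: openin_susp_top)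
qed

lemma flow_line_iter: "y \<in> topspace Y \<Longrightarrow> flow_line (iter k y) = flow_line y"
  using susp_class_int_iter[OF bij_T] by (metis (no_types, opaque_lifting) add_diff_cancel diff_add_cancel)

lemma flow_line_eq_iff:
  assumes "y \<in> topspace Y" "y' \<in> topspace Y"
  shows "flow_line y' = flow_line y \<longleftrightarrow> y' \<in> int_orbit (topspace Y) T y"
proof
  assume "flow_line y' = flow_line y"
  then have "cls y 0 \<in> flow_line y'" by auto
  then obtain t where "cls y 0 = cls y' t" by auto
  then show "y' \<in> int_orbit (topspace Y) T y"
    using susp_class_eq_iff[OF bij_T assms] by (auto simp: int_orbit_def)
next
  assume "y' \<in> int_orbit (topspace Y) T y"
  then obtain k where "y' = iter k y" by (auto simp: int_orbit_def)
  then show "flow_line y' = flow_line y" using flow_line_iter[OF assms(1)] by blast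
qed

lemma flow_line_eq_if_overlap:
  assumes "y \<in> topspace Y" "y' \<in> topspace Y" "m \<in> flow_line y" "m \<in> flow_line y'"
  shows "flow_line y' = flow_line y"
proof -
  obtain t t' where "cls y t = cls y' t'" using assms(3,4) by auto
  then obtain k where "y' = iter k y" using susp_class_eq_iff[OF bij_T assms(1,2)] by blast
  then show ?thesis using flow_line_iter[OF assms(1)] by simp
qed

end

locale twisted_fixed_points = suspension + proper_group_action +
  fixes g :: 'g and n :: int
  assumes g_in: "g \<in> carrier G"
    and n_in_L: "real_of_int n \<in> L_set Y T act g"
    and discrete_Fix_Y:
      "subtopology Y {y \<in> topspace Y. act (inv g) (int_iter (topspace Y) T n y) = y}
        = discrete_topology {y \<in> topspace Y. act (inv g) (int_iter (topspace Y) T n y) = y}"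
begin

abbreviation "Fix_Y \<equiv> {y \<in> topspace Y. act (inv g) (iter n y) = y}"
abbreviation "Fix_M \<equiv> {m \<in> M. susp_act act (inv g) (susp_flow (of_int n) m) = m}"

lemma n_nonzero: "n \<noteq> 0"
  using n_in_L by (simp add: L_set_def)

lemma act_g_Fix_Y: "y \<in> Fix_Y \<Longrightarrow> act g y = iter n y"
  using act_act_inv[OF g_in int_iter_in[OF bij_T, of y n]] by simp

lemma iter_in_Fix_Y:
  assumes y: "y \<in> Fix_Y"
  shows "iter k y \<in> Fix_Y"
proof -
  have y_Y: "y \<in> topspace Y" using y by simp
  have "act (inv g) (iter n (iter k y)) = act (inv g) (iter k (iter n y))"
    using int_iter_add[OF bij_T y_Y, of n k] int_iter_add[OF bij_T y_Y, of k n] by (simp add: add.commute)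
  also have "\<dots> = iter k (act (inv g) (iter n y))"
    by (rule iter_act[OF inv_closed[OF g_in] int_iter_in[OF bij_T y_Y], symmetric])
  also have "\<dots> = iter k y" using y by simp
  finally show ?thesis using int_iter_in[OF bij_T y_Y] by simp
qed

lemma susp_class_in_Fix_M_iff:
  assumes y: "y \<in> topspace Y"
  shows "cls y t \<in> Fix_M \<longleftrightarrow> y \<in> Fix_Y"
proof -
  have gy: "act (inv g) y \<in> topspace Y" using act_closed[OF inv_closed[OF g_in] y] .
  have "susp_act act (inv g) (susp_flow (of_int n) (cls y t)) = cls (act (inv g) y) (t + of_int n)"
    by (simp add: susp_flow_class susp_act_class[OF inv_closed[OF g_in] y])
  then have "cls y t \<in> Fix_M \<longleftrightarrow> cls (act (inv g) y) (t + of_int n) = cls y t"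
    using susp_class_in_susp[OF y] by simp
  also have "\<dots> \<longleftrightarrow> (\<exists>k. y = iter k (act (inv g) y) \<and> t = t + of_int n - of_int k)"
    by (rule susp_class_eq_iff[OF bij_T gy y])
  also have "\<dots> \<longleftrightarrow> y = iter n (act (inv g) y)" by auto
  also have "\<dots> \<longleftrightarrow> y \<in> Fix_Y" using iter_act[OF inv_closed[OF g_in] y] y by auto
  finally show ?thesis .
qed

lemma Fix_M_cases:
  assumes "m \<in> Fix_M"
  obtains y where "y \<in> Fix_Y" "m \<in> flow_line y"
proof -
  obtain y t where "y \<in> topspace Y" "m = cls y t" using assms by (auto elim: susp_cases)
  then show ?thesis using that assms susp_class_in_Fix_M_iff by blast
qed

lemma flow_line_subset_Fix_M: "y \<in> Fix_Y \<Longrightarrow> flow_line y \<subseteq> Fix_M"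
  using susp_class_in_Fix_M_iff by auto

lemma Fix_Y_nonempty: "Fix_Y \<noteq> {}"
proof -
  obtain m where m: "m \<in> M" "susp_flow (of_int n) m = susp_act act g m"
    using n_in_L by (auto simp: L_set_def)
  obtain y t where y: "y \<in> topspace Y" "m = cls y t" using m(1) by (rule susp_cases)
  have "cls y (t + of_int n) = cls (act g y) t"
    using m(2) y by (simp add: susp_flow_class susp_act_class[OF g_in])
  then have "act g y = iter n y"
    using susp_class_eq_iff[OF bij_T y(1) act_closed[OF g_in y(1)]] by auto
  then have "y \<in> Fix_Y" using act_inv_act[OF g_in y(1)] y(1) by simp
  then show ?thesis by blast
qed

lemma closedin_Fix_Y: "closedin Y Fix_Y"
proof -
  have "continuous_map Y Y (act (inv g) \<circ> iter n)"
    by (rule continuous_map_compose[OF continuous_map_int_iter[OF bij_T continuous_T continuous_T_inv]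
          continuous_map_act_left[OF inv_closed[OF g_in]]])
  from closedin_continuous_maps_eq[OF Hausdorff_Y this continuous_map_id] show ?thesis by simp
qed

lemma openin_flow_line:
  assumes y: "y \<in> Fix_Y"
  shows "openin (subtopology (susp_top Y T) Fix_M) (flow_line y)"
proof -
  have "openin (subtopology Y Fix_Y) {y}" using y by (simp add: discrete_Fix_Y)
  then obtain V where V: "openin Y V" "{y} = V \<inter> Fix_Y" by (auto simp: openin_subtopology)
  let ?U = "{m \<in> M. m \<inter> (V \<times> UNIV) \<noteq> {}}"
  have "flow_line y = ?U \<inter> Fix_M"
  proof (intro Set.set_eqI iffI)
    fix m assume "m \<in> flow_line y"
    then obtain t where "m = cls y t" by blast
    then show "m \<in> ?U \<inter> Fix_M"
      using y V(2) susp_class_in_Fix_M_iff susp_class_in_susp susp_class_self by fastforce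
  next
    fix m assume m: "m \<in> ?U \<inter> Fix_M"
    then obtain w s where ws: "(w, s) \<in> m" "w \<in> V" by auto
    have "m = cls w s" "w \<in> topspace Y" using susp_eq_class_of_mem[OF bij_T _ ws(1)] m by auto
    then have "w = y" using m ws(2) V(2) susp_class_in_Fix_M_iff by blast
    then show "m \<in> flow_line y" using \<open>m = cls w s\<close> by blast
  qed
  then show ?thesis
    using openin_susp_top_saturation[OF V(1)] by (auto simp: openin_subtopology)
qed

lemma flow_line_in_components:
  assumes y: "y \<in> Fix_Y"
  shows "flow_line y \<in> connected_components_of (subtopology (susp_top Y T) Fix_M)"
proof (rule connected_clopen_in_connected_components_of)
  have y_Y: "y \<in> topspace Y" using y by simp
  have sub: "flow_line y \<subseteq> Fix_M" by (rule flow_line_subset_Fix_M[OF y])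
  then show "connectedin (subtopology (susp_top Y T) Fix_M) (flow_line y)"
    using connectedin_flow_line[OF y_Y] by (simp add: connectedin_subtopology)
  show "openin (subtopology (susp_top Y T) Fix_M) (flow_line y)"
    by (rule openin_flow_line[OF y])
  have "Fix_M - flow_line y = \<Union>{flow_line y' | y'. y' \<in> Fix_Y \<and> flow_line y' \<noteq> flow_line y}"
  proof (intro Set.set_eqI iffI)
    fix m assume m: "m \<in> Fix_M - flow_line y"
    then have "m \<in> Fix_M" by blast
    then obtain y' where y': "y' \<in> Fix_Y" "m \<in> flow_line y'" by (rule Fix_M_cases)
    then have "flow_line y' \<noteq> flow_line y" using m by blast
    with y' show "m \<in> \<Union>{flow_line y' | y'. y' \<in> Fix_Y \<and> flow_line y' \<noteq> flow_line y}" by blast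
  next
    fix m assume "m \<in> \<Union>{flow_line y' | y'. y' \<in> Fix_Y \<and> flow_line y' \<noteq> flow_line y}"
    then obtain y' where y': "y' \<in> Fix_Y" "flow_line y' \<noteq> flow_line y" "m \<in> flow_line y'" by blast
    then have "m \<notin> flow_line y" using flow_line_eq_if_overlap[of y y' m] y_Y by blast
    moreover have "m \<in> Fix_M" using y' flow_line_subset_Fix_M by blast
    ultimately show "m \<in> Fix_M - flow_line y" by blast
  qed
  then have "openin (subtopology (susp_top Y T) Fix_M) (Fix_M - flow_line y)"
    using openin_flow_line by (auto intro!: openin_Union)
  then show "closedin (subtopology (susp_top Y T) Fix_M) (flow_line y)"
    using sub by (simp add: closedin_def topspace_susp_top Int_absorb1)
  show "cls y 0 \<in> flow_line y" by blast
qed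

lemma fibre_flow_line:
  assumes y: "y \<in> Fix_Y"
  shows "{y' \<in> Fix_Y. flow_line y' = flow_line y} = int_orbit (topspace Y) T y"
proof -
  have y_Y: "y \<in> topspace Y" using y by simp
  show ?thesis
  proof (intro Set.set_eqI iffI)
    fix y' assume "y' \<in> {y' \<in> Fix_Y. flow_line y' = flow_line y}"
    then have "y' \<in> topspace Y" "flow_line y' = flow_line y" by auto
    then show "y' \<in> int_orbit (topspace Y) T y" using flow_line_eq_iff[OF y_Y] by blast
  next
    fix y' assume y': "y' \<in> int_orbit (topspace Y) T y"
    then have "y' \<in> Fix_Y" using iter_in_Fix_Y[OF y] by (auto simp: int_orbit_def)
    moreover have "flow_line y' = flow_line y"
      using flow_line_eq_iff[OF y_Y] y' \<open>y' \<in> Fix_Y\<close> by blast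
    ultimately show "y' \<in> {y' \<in> Fix_Y. flow_line y' = flow_line y}" by blast
  qed
qed

lemma act_pow_Fix_Y:
  assumes y: "y \<in> Fix_Y"
  shows "act (g [^] j) y = iter (n * int j) y"
proof (induction j)
  case (Suc j)
  have y_Y: "y \<in> topspace Y" using y by simp
  have "act (g [^] Suc j) y = act (g [^] j) (act g y)"
    using act_mult[OF nat_pow_closed[OF g_in] g_in y_Y] by simp
  also have "\<dots> = iter n (act (g [^] j) y)"
    using act_g_Fix_Y[OF y] iter_act[OF nat_pow_closed[OF g_in] y_Y] by simp
  also have "\<dots> = iter (n * int (Suc j)) y"
    using Suc int_iter_add[OF bij_T y_Y, of n "n * int j"] by (simp add: algebra_simps)
  finally show ?case .
qed (use y act_one in simp)

lemma finite_int_orbit_if_compact_subgroup: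
  assumes H: "subgroup H G" "compactin Gtop H" "g \<in> H" and y: "y \<in> Fix_Y"
  shows "finite (int_orbit (topspace Y) T y)"
proof (rule finite_int_orbit_if_finite_multiples[OF bij_T _ n_nonzero])
  show y_Y: "y \<in> topspace Y" using y by simp
  have "compactin Y (Fix_Y \<inter> (\<lambda>a. act a y) ` H)"
    by (rule closed_Int_compactin[OF closedin_Fix_Y image_compactin[OF H(2) continuous_map_orbit_map[OF y_Y]]])
  then have "compactin (subtopology Y Fix_Y) (Fix_Y \<inter> (\<lambda>a. act a y) ` H)"
    by (simp add: compactin_subtopology)
  then have fin: "finite (Fix_Y \<inter> (\<lambda>a. act a y) ` H)"
    by (simp add: discrete_Fix_Y compactin_discrete_topology)
  have "g [^] j \<in> H" for j :: nat
    by (induction j) (simp_all add: subgroup.one_closed[OF H(1)] subgroup.m_closed[OF H(1)] H(3))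
  then have "range (\<lambda>j::nat. iter (n * int j) y) \<subseteq> Fix_Y \<inter> (\<lambda>a. act a y) ` H"
    using act_pow_Fix_Y[OF y, symmetric] iter_in_Fix_Y[OF y] by blast
  then show "finite (range (\<lambda>j::nat. iter (n * int j) y))" using fin by (rule finite_subset)
qed

lemma compact_subgroup_if_finite_int_orbit:
  assumes y: "y \<in> Fix_Y" and fin: "finite (int_orbit (topspace Y) T y)"
  shows "\<exists>H. subgroup H G \<and> compactin Gtop H \<and> g \<in> H"
proof (intro exI conjI)
  let ?K = "int_orbit (topspace Y) T y"
  have y_Y: "y \<in> topspace Y" using y by simp
  have K_Y: "?K \<subseteq> topspace Y" using int_iter_in[OF bij_T y_Y] by (auto simp: int_orbit_def)
  show "subgroup {a \<in> carrier G. act a ` ?K \<subseteq> ?K} G"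
    by (rule subgroup_setwise_stabiliser[OF fin K_Y])
  show "compactin Gtop {a \<in> carrier G. act a ` ?K \<subseteq> ?K}"
    by (rule compactin_setwise_stabiliser[OF fin K_Y, of y])
      (metis int_orbit_def int_iter_0 rangeI)
  have "act g (iter k y) = iter (k + n) y" for k
    using iter_act[OF g_in y_Y] act_g_Fix_Y[OF y] int_iter_add[OF bij_T y_Y] by simp
  then show "g \<in> {a \<in> carrier G. act a ` ?K \<subseteq> ?K}"
    using g_in by (auto simp: int_orbit_def)
qed

theorem finite_fibres_iff_compact_subgroup:
  "(\<forall>C \<in> connected_components_of (subtopology (susp_top Y T) Fix_M).
      finite {y \<in> Fix_Y. flow_line y = C})
    \<longleftrightarrow> (\<exists>H. subgroup H G \<and> compactin Gtop H \<and> g \<in> H)"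
proof
  assume fin: "\<forall>C \<in> connected_components_of (subtopology (susp_top Y T) Fix_M).
      finite {y \<in> Fix_Y. flow_line y = C}"
  obtain y where y: "y \<in> Fix_Y" using Fix_Y_nonempty by blast
  have "finite {y' \<in> Fix_Y. flow_line y' = flow_line y}"
    using bspec[OF fin flow_line_in_components[OF y]] .
  then have "finite (int_orbit (topspace Y) T y)" by (simp only: fibre_flow_line[OF y])
  then show "\<exists>H. subgroup H G \<and> compactin Gtop H \<and> g \<in> H"
    by (rule compact_subgroup_if_finite_int_orbit[OF y])
next
  assume "\<exists>H. subgroup H G \<and> compactin Gtop H \<and> g \<in> H"
  then obtain H where H: "subgroup H G" "compactin Gtop H" "g \<in> H" by blast
  show "\<forall>C \<in> connected_components_of (subtopology (susp_top Y T) Fix_M).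
      finite {y \<in> Fix_Y. flow_line y = C}"
  proof
    fix C
    show "finite {y \<in> Fix_Y. flow_line y = C}"
    proof (cases "\<exists>y \<in> Fix_Y. flow_line y = C")
      case True
      then obtain y where "y \<in> Fix_Y" "C = flow_line y" by blast
      then show ?thesis
        using fibre_flow_line finite_int_orbit_if_compact_subgroup[OF H] by simp
    next
      case False
      then have "{y \<in> Fix_Y. flow_line y = C} = {}" by blast
      then show ?thesis by (metis finite.emptyI)
    qed
  qed
qed

end

lemma diffeomorphismD:
  assumes "diffeomorphism Y A T"
  shows "bij_betw T (topspace Y) (topspace Y)" "continuous_map Y Y T"
    and "continuous_map Y Y (inv_into (topspace Y) T)"
  using assms unfolding diffeomorphism_def smooth_map_def by auto

lemma proper_group_action_if_proper_cocompact_smooth_action: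
  assumes "locally_compact_group G Gtop" "smooth_manifold Y A"
    and "proper_cocompact_smooth_action G Gtop Y A act"
  shows "proper_group_action G Gtop Y act"
  using assms
  unfolding locally_compact_group_def smooth_manifold_def proper_cocompact_smooth_action_def
  by (auto intro!: proper_group_action.intro continuous_group_action.intro
      proper_group_action_axioms.intro continuous_group_action_axioms.intro)

theorem corollary5p8:
  fixes G :: "('g,'b) monoid_scheme" and Gtop :: "'g topology"
    and Y :: "'y topology" and A :: "('y,'n::finite) chart set"
    and act :: "'g \<Rightarrow> 'y \<Rightarrow> 'y" and T :: "'y \<Rightarrow> 'y" and g :: 'g and n :: int
  assumes lcg: "locally_compact_group G Gtop"
    and mfd: "smooth_manifold Y A"
    and action: "proper_cocompact_smooth_action G Gtop Y A act"
    and T_diffeo: "diffeomorphism Y A T"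
    and T_comm: "\<forall>a\<in>carrier G. \<forall>y\<in>topspace Y. T (act a y) = act a (T y)"
    and g_in: "g \<in> carrier G"
    and fix_discrete: "\<forall>k::int. k \<noteq> 0 \<longrightarrow>
          (let F = (\<lambda>y. act (inv\<^bsub>G\<^esub> g) (int_iter (topspace Y) T k y));
               Fix = {y \<in> topspace Y. F y = y}
           in (Fix = {} \<or> subtopology Y Fix = discrete_topology Fix) \<and>
              (\<forall>y\<in>Fix. nondegenerate_fixpoint Y A F y))"
    and n_in_L: "real_of_int n \<in> L_set Y T act g"
  shows "(let FixY = {y \<in> topspace Y. act (inv\<^bsub>G\<^esub> g) (int_iter (topspace Y) T n y) = y};
              M = susp (topspace Y) T;
              FixM = {m \<in> M. susp_act act (inv\<^bsub>G\<^esub> g) (susp_flow (of_int n) m) = m};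
              f = (\<lambda>y. {susp_class (topspace Y) T y t | t. True})
          in (\<forall>C \<in> connected_components_of (subtopology (susp_top Y T) FixM).
                 finite {y \<in> FixY. f y = C}))
         \<longleftrightarrow> (\<exists>H. subgroup H G \<and> compactin Gtop H \<and> g \<in> H)"
proof -
  interpret proper_group_action G Gtop Y act
    using lcg mfd action by (rule proper_group_action_if_proper_cocompact_smooth_action)
  let ?Fix = "{y \<in> topspace Y. act (inv\<^bsub>G\<^esub> g) (int_iter (topspace Y) T n y) = y}"
  have "n \<noteq> 0" using n_in_L by (simp add: L_set_def)
  then have "?Fix = {} \<or> subtopology Y ?Fix = discrete_topology ?Fix"
    using fix_discrete unfolding Let_def by blast
  then have "subtopology Y ?Fix = discrete_topology ?Fix"
  proof
    assume "?Fix = {}"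
    then show ?thesis by (simp only: subtopology_empty_iff_trivial)
  qed
  then interpret twisted_fixed_points G Gtop Y act T g n
    using diffeomorphismD[OF T_diffeo] T_comm g_in n_in_L by unfold_locales auto
  show ?thesis unfolding Let_def by (rule finite_fibres_iff_compact_subgroup)
qed

end
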